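(* Fix $\alpha\in(0,1)$, a number of agents $M$, a measurable score $V:\mathcal X\times\mathcal Y\to\mathbb R$ and a test distribution $P_{\mathrm{test}}$ on $\mathcal X\times\mathcal Y$ such that the CDF $G(v)=P_{\mathrm{test}}(V(X,Y)\le v)$ is continuous. Consider a sequence of settings indexed by $t=1,2,\dots$: in setting $t$, agent $k$ has calibration sample size $n_{k,t}$ and calibration distribution $P^{\mathrm{cal}}_{k,t}$, the calibration samples are independent across agents and i.i.d. within each agent, and $\widehat q_t=\sum_k\frac{n_{k,t}}{N_t}\widehat q_{k,t}$ and $\widehat q_{\mathrm{mix},t}=\widehat F_{\mathrm{mix},t}^{-1}(1-\alpha)$ are the aggregated threshold and the empirical mixture quantile. Assume that as $t\to\infty$: $n_{k,t}\to\infty$ for every $k$; $\sup_k d_{\mathrm{TV}}(P^{\mathrm{cal}}_{k,t},P_{\mathrm{test}})\to0$; and $|\widehat q_t-\widehat q_{\mathrm{mix},t}|\to0$ in probability. Then \[ \Big|\mathbb P\big(Y\in C_{\widehat q_t}(X)\big)-(1-\alpha)\Big|\to0, \] where $(X,Y)\sim P_{\mathrm{test}}$ is independent of the calibration data.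
   Context: For $q\in\mathbb R$, $C_q(x)=\{y: V(x,y)\le q\}$. In setting $t$, agent $k$'s calibration scores are $V_{k,i}=V(x_{k,i},y_{k,i})$, $i=1,\dots,n_{k,t}$; $N_t=\sum_k n_{k,t}$; the local threshold $\widehat q_{k,t}$ is the $\lceil (n_{k,t}+1)(1-\alpha)\rceil$-th smallest score of agent $k$ (defined once $n_{k,t}$ is large enough that this index is at most $n_{k,t}$); $\widehat F_{k,t}(v)=\frac1{n_{k,t}}\sum_i\mathbf 1\{V_{k,i}\le v\}$, $\widehat F_{\mathrm{mix},t}=\sum_k\frac{n_{k,t}}{N_t}\widehat F_{k,t}$, and $F^{-1}(p)=\inf\{v: F(v)\ge p\}$. $d_{\mathrm{TV}}(P,Q)=\sup_A|P(A)-Q(A)|$. (The paper's regime has the Dirichlet concentration parameter of the calibration partition tending to infinity, which is what drives the total variation distances to zero.) *)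

theory Defs
  imports "HOL-Probability.Probability"
begin

definition C_set :: "('x \<times> 'y \<Rightarrow> real) \<Rightarrow> real \<Rightarrow> 'x \<Rightarrow> 'y set" where
  "C_set V q x = {y. V (x, y) \<le> q}"

definition kth_smallest :: "real list \<Rightarrow> nat \<Rightarrow> real" where
  "kth_smallest xs j = sort xs ! (j - 1)"

definition local_thr :: "('z \<Rightarrow> real) \<Rightarrow> real \<Rightarrow> nat \<Rightarrow> (nat \<Rightarrow> 'z) \<Rightarrow> real" where
  "local_thr V \<alpha> n s =
     kth_smallest (map (\<lambda>i. V (s i)) [0..<n]) (nat \<lceil>(real n + 1) * (1 - \<alpha>)\<rceil>)"

definition ecdf :: "('z \<Rightarrow> real) \<Rightarrow> nat \<Rightarrow> (nat \<Rightarrow> 'z) \<Rightarrow> real \<Rightarrow> real" where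
  "ecdf V n s v = real (card {i. i < n \<and> V (s i) \<le> v}) / real n"

definition total_size :: "nat \<Rightarrow> (nat \<Rightarrow> nat) \<Rightarrow> nat" where
  "total_size M n = (\<Sum>k<M. n k)"

text \<open>Calibration data d: agent k's i-th sample is d (k, i).\<close>
definition mix_cdf :: "('z \<Rightarrow> real) \<Rightarrow> nat \<Rightarrow> (nat \<Rightarrow> nat) \<Rightarrow> (nat \<times> nat \<Rightarrow> 'z) \<Rightarrow> real \<Rightarrow> real" where
  "mix_cdf V M n d v =
     (\<Sum>k<M. (real (n k) / real (total_size M n)) * ecdf V (n k) (\<lambda>i. d (k, i)) v)"

definition gen_inv :: "(real \<Rightarrow> real) \<Rightarrow> real \<Rightarrow> real" where
  "gen_inv F p = Inf {v. F v \<ge> p}"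

definition agg_thr :: "('z \<Rightarrow> real) \<Rightarrow> real \<Rightarrow> nat \<Rightarrow> (nat \<Rightarrow> nat) \<Rightarrow> (nat \<times> nat \<Rightarrow> 'z) \<Rightarrow> real" where
  "agg_thr V \<alpha> M n d =
     (\<Sum>k<M. (real (n k) / real (total_size M n)) * local_thr V \<alpha> (n k) (\<lambda>i. d (k, i)))"

definition mix_thr :: "('z \<Rightarrow> real) \<Rightarrow> real \<Rightarrow> nat \<Rightarrow> (nat \<Rightarrow> nat) \<Rightarrow> (nat \<times> nat \<Rightarrow> 'z) \<Rightarrow> real" where
  "mix_thr V \<alpha> M n d = gen_inv (mix_cdf V M n d) (1 - \<alpha>)"

definition cal_measure :: "nat \<Rightarrow> (nat \<Rightarrow> nat) \<Rightarrow> (nat \<Rightarrow> 'z measure) \<Rightarrow> (nat \<times> nat \<Rightarrow> 'z) measure" where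
  "cal_measure M n Pc = PiM {(k, i). k < M \<and> i < n k} (\<lambda>(k, i). Pc k)"

definition tv_dist :: "'z measure \<Rightarrow> 'z measure \<Rightarrow> real" where
  "tv_dist P Q = (SUP A \<in> sets P. \<bar>measure P A - measure Q A\<bar>)"

end

theory Submission
  imports Defs
begin

(* The test CDF G is continuous, so for small delta > 0 there are v1, v2 with
   G v1 = 1 - alpha - delta and G v2 = 1 - alpha + delta.  Once every calibration law is within
   delta/2 of the test law in total variation, the CDF of agent k is at most 1 - alpha - delta/2
   at v1 and at least 1 - alpha + delta/2 at v2.  The local threshold is the order statistic of
   rank about n_k (1 - alpha), so Hoeffding's inequality for the empirical counts puts it in
   [v1, v2] except with probability 2 exp (- n_k delta^2 / 8).  The aggregated threshold is a
   convex combination of the local ones, hence lies in [v1, v2] off the union of these events,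
   and as the test point is independent of the calibration data, the coverage is within
   delta + sum_k 2 exp (- n_k delta^2 / 8) of 1 - alpha. *)

definition conformal_rank :: "real \<Rightarrow> nat \<Rightarrow> nat" where
  "conformal_rank \<alpha> n = nat \<lceil>(real n + 1) * (1 - \<alpha>)\<rceil>"

lemma conformal_rank_bounds:
  assumes "0 < \<alpha>" "\<alpha> < 1" "1 \<le> real n * \<alpha>"
  shows "1 \<le> conformal_rank \<alpha> n" and "conformal_rank \<alpha> n \<le> n"
proof -
  have "0 < (real n + 1) * (1 - \<alpha>)"
    using assms by simp
  moreover have "(real n + 1) * (1 - \<alpha>) \<le> real n"
    using assms by (simp add: algebra_simps)
  ultimately show "1 \<le> conformal_rank \<alpha> n" "conformal_rank \<alpha> n \<le> n"
    by (simp_all add: conformal_rank_def le_nat_iff nat_le_iff ceiling_le_iff)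
qed

lemma conformal_rank_margin:
  assumes "0 < \<alpha>" "\<alpha> < 1" "0 < \<delta>" "8 \<le> real n * \<delta>"
  shows "real n * (1 - \<alpha>) - real n * \<delta> / 4 \<le> conformal_rank \<alpha> n"
    and "conformal_rank \<alpha> n \<le> real n * (1 - \<alpha>) + real n * \<delta> / 4"
proof -
  have "real (conformal_rank \<alpha> n) = of_int \<lceil>(real n + 1) * (1 - \<alpha>)\<rceil>"
    using assms(2) by (simp add: conformal_rank_def)
  then have "(real n + 1) * (1 - \<alpha>) \<le> conformal_rank \<alpha> n"
    and "conformal_rank \<alpha> n < (real n + 1) * (1 - \<alpha>) + 1"
    by (simp_all add: le_of_int_ceiling) linarith
  moreover have "0 \<le> real n * \<delta>"
    using assms(3) by simp
  ultimately show "real n * (1 - \<alpha>) - real n * \<delta> / 4 \<le> conformal_rank \<alpha> n"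
    and "conformal_rank \<alpha> n \<le> real n * (1 - \<alpha>) + real n * \<delta> / 4"
    using assms by (simp_all add: algebra_simps)
qed

lemma sorted_nth_le_iff_card:
  fixes ys :: "'a :: linorder list"
  assumes "sorted ys" "1 \<le> j" "j \<le> length ys"
  shows "ys ! (j - 1) \<le> v \<longleftrightarrow> j \<le> card {i. i < length ys \<and> ys ! i \<le> v}"
proof
  assume "ys ! (j - 1) \<le> v"
  moreover have "ys ! i \<le> ys ! (j - 1)" if "i < j" for i
    using assms that by (intro sorted_nth_mono) auto
  ultimately have "{..<j} \<subseteq> {i. i < length ys \<and> ys ! i \<le> v}"
    using assms by force
  from card_mono[OF _ this] show "j \<le> card {i. i < length ys \<and> ys ! i \<le> v}" by simp
next
  assume j: "j \<le> card {i. i < length ys \<and> ys ! i \<le> v}"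
  show "ys ! (j - 1) \<le> v"
  proof (rule ccontr)
    assume above: "\<not> ys ! (j - 1) \<le> v"
    have "i < j - 1" if i: "i < length ys" "ys ! i \<le> v" for i
    proof (rule ccontr)
      assume "\<not> i < j - 1"
      then have "ys ! (j - 1) \<le> ys ! i" using assms i by (intro sorted_nth_mono) auto
      then show False using i above by (meson order_trans)
    qed
    then have "{i. i < length ys \<and> ys ! i \<le> v} \<subseteq> {..<j - 1}" by auto
    from card_mono[OF _ this] show False using j assms(2) by simp
  qed
qed

lemma kth_smallest_le_iff:
  assumes "1 \<le> j" "j \<le> length xs"
  shows "kth_smallest xs j \<le> v \<longleftrightarrow> j \<le> length (filter (\<lambda>x. x \<le> v) xs)"
proof -
  have "kth_smallest xs j \<le> v \<longleftrightarrow> j \<le> card {i. i < length (sort xs) \<and> sort xs ! i \<le> v}"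
    unfolding kth_smallest_def using assms by (intro sorted_nth_le_iff_card) auto
  also have "card {i. i < length (sort xs) \<and> sort xs ! i \<le> v} =
      length (filter (\<lambda>x. x \<le> v) (sort xs))"
    by (simp add: length_filter_conv_card)
  also have "\<dots> = length (filter (\<lambda>x. x \<le> v) xs)"
    by (metis filter_sort length_sort)
  finally show ?thesis .
qed

lemma local_thr_le_iff:
  assumes "1 \<le> conformal_rank \<alpha> n" "conformal_rank \<alpha> n \<le> n"
  shows "local_thr V \<alpha> n s \<le> v \<longleftrightarrow> conformal_rank \<alpha> n \<le> card {i. i < n \<and> V (s i) \<le> v}"
proof -
  have "length (filter (\<lambda>x. x \<le> v) (map (\<lambda>i. V (s i)) [0..<n])) = card {i. i < n \<and> V (s i) \<le> v}"
    by (simp add: length_filter_conv_card cong: conj_cong)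
  then show ?thesis
    using assms by (simp add: local_thr_def kth_smallest_le_iff flip: conformal_rank_def)
qed

lemma local_thr_notin_interval:
  assumes "1 \<le> conformal_rank \<alpha> n" "conformal_rank \<alpha> n \<le> n"
    and "local_thr V \<alpha> n s \<notin> {v1..v2}"
  shows "conformal_rank \<alpha> n \<le> card {i. i < n \<and> V (s i) \<le> v1}
    \<or> card {i. i < n \<and> V (s i) \<le> v2} < conformal_rank \<alpha> n"
proof -
  have "local_thr V \<alpha> n s \<le> v1 \<or> \<not> local_thr V \<alpha> n s \<le> v2"
    using assms(3) by auto
  then show ?thesis
    unfolding local_thr_le_iff[OF assms(1,2)] not_le .
qed

lemma indep_vars_PiM_components:
  fixes N :: "'i \<Rightarrow> 'z measure"
  assumes N: "\<And>i. i \<in> I \<Longrightarrow> prob_space (N i)" and "I \<noteq> {}"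
  shows "prob_space.indep_vars (PiM I N) N (\<lambda>i x. x i) I"
proof -
  interpret prob_space "PiM I N" using N by (rule prob_space_PiM)
  have "distr (PiM I N) (PiM I N) (\<lambda>x. restrict x I) = distr (PiM I N) (PiM I N) (\<lambda>x. x)"
    by (rule distr_cong) (auto simp: space_PiM PiE_iff extensional_restrict)
  also have "\<dots> = (\<Pi>\<^sub>M i\<in>I. distr (PiM I N) (N i) (\<lambda>x. x i))"
    by (simp add: distr_PiM_component N cong: PiM_cong)
  finally show ?thesis
    by (subst indep_vars_iff_distr_eq_PiM'[OF \<open>I \<noteq> {}\<close>]) auto
qed

lemma PiM_count_hoeffding:
  fixes N :: "'i \<Rightarrow> 'z measure" and Q :: "'z \<Rightarrow> bool" and \<epsilon> :: real
  assumes prob_N: "\<And>i. i \<in> I \<Longrightarrow> prob_space (N i)"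
    and J: "finite J" "J \<subseteq> I" "J \<noteq> {}" and NJ: "\<And>i. i \<in> J \<Longrightarrow> N i = P"
    and Q[measurable]: "Measurable.pred P Q" and \<epsilon>: "0 \<le> \<epsilon>"
  defines "p \<equiv> measure P {z \<in> space P. Q z}"
  shows "measure (PiM I N) {d \<in> space (PiM I N). real (card J) * p + \<epsilon> \<le> real (card {i \<in> J. Q (d i)})}
           \<le> exp (-2 * \<epsilon>\<^sup>2 / real (card J))"
    and "measure (PiM I N) {d \<in> space (PiM I N). real (card {i \<in> J. Q (d i)}) \<le> real (card J) * p - \<epsilon>}
           \<le> exp (-2 * \<epsilon>\<^sup>2 / real (card J))"
proof -
  interpret prob_space "PiM I N" using prob_N by (rule prob_space_PiM)
  define X :: "'i \<Rightarrow> ('i \<Rightarrow> 'z) \<Rightarrow> real" where "X = (\<lambda>i d. of_bool (Q (d i)))"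
  have Q_N: "Measurable.pred (N i) Q" if "i \<in> J" for i
    using that by (simp add: NJ)
  have "I \<noteq> {}" using J by auto
  then have "indep_vars N (\<lambda>i x. x i) J"
    by (intro indep_vars_subset[OF indep_vars_PiM_components] prob_N J(2))
  then have indep: "indep_vars (\<lambda>_. borel) X J"
    unfolding X_def by (rule indep_vars_compose2) (use Q_N in measurable)
  have expectation_X: "expectation (X i) = p" if i: "i \<in> J" for i
  proof -
    have "expectation (X i) = (\<integral>z. of_bool (Q z) \<partial>distr (PiM I N) (N i) (\<lambda>d. d i))"
      using i J Q_N[OF i] by (subst integral_distr) (auto simp: X_def)
    also have "\<dots> = (\<integral>z. of_bool (Q z) \<partial>P)"
      using i J prob_N by (subst distr_PiM_component) (auto simp: NJ)
    also have "(\<lambda>z. of_bool (Q z) :: real) = indicator {z. Q z}"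
      by (auto simp: indicator_def)
    also have "integral\<^sup>L P (indicator {z. Q z}) = p"
      by (simp add: p_def Int_def conj_commute)
    finally show ?thesis .
  qed
  have mean: "real (card J) * p = (\<Sum>i\<in>J. expectation (X i))"
    by (simp add: expectation_X)
  have X_bounds: "0 \<le> X i d" "X i d \<le> 1" for i d
    by (simp_all add: X_def)
  interpret Hoeffding_ineq "PiM I N" J X "\<lambda>_. 0" "\<lambda>_. 1" "real (card J) * p"
    by unfold_locales (simp_all add: J(1) indep X_bounds mean)
  have card_pos: "(\<Sum>i\<in>J. ((1::real) - 0)\<^sup>2) > 0" and card_eq: "(\<Sum>i\<in>J. ((1::real) - 0)\<^sup>2) = card J"
    using J by (simp_all add: card_gt_0_iff)
  have sum_X: "(\<Sum>i\<in>J. X i d) = real (card {i \<in> J. Q (d i)})" for d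
    using J(1) by (simp add: X_def Int_def)
  show "measure (PiM I N) {d \<in> space (PiM I N). real (card J) * p + \<epsilon> \<le> real (card {i \<in> J. Q (d i)})}
           \<le> exp (-2 * \<epsilon>\<^sup>2 / real (card J))"
    using Hoeffding_ineq_ge[OF \<epsilon> card_pos] by (simp only: card_eq sum_X)
  show "measure (PiM I N) {d \<in> space (PiM I N). real (card {i \<in> J. Q (d i)}) \<le> real (card J) * p - \<epsilon>}
           \<le> exp (-2 * \<epsilon>\<^sup>2 / real (card J))"
    using Hoeffding_ineq_le[OF \<epsilon> card_pos] by (simp only: card_eq sum_X)
qed

lemma prob_space_cal_measure:
  assumes "\<And>k. k < M \<Longrightarrow> prob_space (Pc k)"
  shows "prob_space (cal_measure M n Pc)"
  unfolding cal_measure_def by (rule prob_space_PiM) (use assms in auto)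

lemma cal_measure_count_hoeffding:
  fixes Q :: "'z \<Rightarrow> bool" and \<epsilon> :: real
  assumes Pc: "\<And>k. k < M \<Longrightarrow> prob_space (Pc k)" and k: "k < M" "0 < n k"
    and Q: "Measurable.pred (Pc k) Q" and \<epsilon>: "0 \<le> \<epsilon>"
  defines "p \<equiv> measure (Pc k) {z \<in> space (Pc k). Q z}"
  shows "measure (cal_measure M n Pc) {d \<in> space (cal_measure M n Pc).
            real (n k) * p + \<epsilon> \<le> real (card {i. i < n k \<and> Q (d (k, i))})} \<le> exp (-2 * \<epsilon>\<^sup>2 / real (n k))"
    and "measure (cal_measure M n Pc) {d \<in> space (cal_measure M n Pc).
            real (card {i. i < n k \<and> Q (d (k, i))}) \<le> real (n k) * p - \<epsilon>} \<le> exp (-2 * \<epsilon>\<^sup>2 / real (n k))"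
proof -
  define J where "J = Pair k ` {..<n k}"
  have J: "finite J" "J \<subseteq> {(k, i). k < M \<and> i < n k}" "J \<noteq> {}"
    and law: "\<And>j. j \<in> J \<Longrightarrow> (\<lambda>(k, i). Pc k) j = Pc k"
    using k by (auto simp: J_def)
  have card_J: "card J = n k"
    by (simp add: J_def card_image inj_on_def)
  have count: "card {j \<in> J. Q (d j)} = card {i. i < n k \<and> Q (d (k, i))}" for d
  proof -
    have "{j \<in> J. Q (d j)} = Pair k ` {i. i < n k \<and> Q (d (k, i))}"
      by (auto simp: J_def)
    then show ?thesis by (simp add: card_image inj_on_def)
  qed
  have prob: "\<And>j. j \<in> {(k, i). k < M \<and> i < n k} \<Longrightarrow> prob_space ((\<lambda>(k, i). Pc k) j)"
    using Pc by auto
  note hoeffding = PiM_count_hoeffding[where I = "{(k, i). k < M \<and> i < n k}" and N = "\<lambda>(k, i). Pc k",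
      OF prob J law Q \<epsilon>, folded cal_measure_def p_def,
      unfolded card_J count]
  show "measure (cal_measure M n Pc) {d \<in> space (cal_measure M n Pc).
            real (n k) * p + \<epsilon> \<le> real (card {i. i < n k \<and> Q (d (k, i))})} \<le> exp (-2 * \<epsilon>\<^sup>2 / real (n k))"
    by (rule hoeffding(1))
  show "measure (cal_measure M n Pc) {d \<in> space (cal_measure M n Pc).
            real (card {i. i < n k \<and> Q (d (k, i))}) \<le> real (n k) * p - \<epsilon>} \<le> exp (-2 * \<epsilon>\<^sup>2 / real (n k))"
    by (rule hoeffding(2))
qed

lemma cal_measure_count_measurable:
  assumes k: "k < M" and Q: "Measurable.pred (Pc k) Q"
  shows "(\<lambda>d. real (card {i. i < n k \<and> Q (d (k, i))})) \<in> borel_measurable (cal_measure M n Pc)"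
proof -
  have count: "real (card {i. i < n k \<and> Q (d (k, i))}) = (\<Sum>i<n k. of_bool (Q (d (k, i))))" for d
    by (simp add: Int_def)
  have "(\<lambda>d. d (k, i)) \<in> cal_measure M n Pc \<rightarrow>\<^sub>M Pc k" if "i < n k" for i
    using measurable_component_singleton[of "(k, i)" "{(k, i). k < M \<and> i < n k}" "\<lambda>(k, i). Pc k"]
      k that by (simp add: cal_measure_def)
  then show ?thesis
    unfolding count
    by (intro borel_measurable_sum measurable_compose[OF measurable_compose[OF _ Q] measurable_of_bool])
      simp
qed

lemma local_thr_measurable:
  assumes k: "k < M" and V: "V \<in> borel_measurable (Pc k)"
    and rank: "1 \<le> conformal_rank \<alpha> (n k)" "conformal_rank \<alpha> (n k) \<le> n k"
  shows "(\<lambda>d. local_thr V \<alpha> (n k) (\<lambda>i. d (k, i))) \<in> borel_measurable (cal_measure M n Pc)"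
proof (rule borel_measurableI_le)
  fix v
  have "Measurable.pred (Pc k) (\<lambda>z. V z \<le> v)"
    using V by (rule pred_le_const) simp
  from borel_measurable_le[OF borel_measurable_const
      cal_measure_count_measurable[where Pc = Pc and n = n, OF k this]]
  have "{d \<in> space (cal_measure M n Pc).
      real (conformal_rank \<alpha> (n k)) \<le> real (card {i. i < n k \<and> V (d (k, i)) \<le> v})}
    \<in> sets (cal_measure M n Pc)" .
  then show "{d \<in> space (cal_measure M n Pc). local_thr V \<alpha> (n k) (\<lambda>i. d (k, i)) \<le> v}
    \<in> sets (cal_measure M n Pc)"
    unfolding of_nat_le_iff local_thr_le_iff[OF rank] .
qed

lemma agg_thr_measurable:
  assumes "\<And>k. k < M \<Longrightarrow> V \<in> borel_measurable (Pc k)"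
    and "\<And>k. k < M \<Longrightarrow> 1 \<le> conformal_rank \<alpha> (n k) \<and> conformal_rank \<alpha> (n k) \<le> n k"
  shows "agg_thr V \<alpha> M n \<in> borel_measurable (cal_measure M n Pc)"
  unfolding agg_thr_def using assms
  by (intro borel_measurable_sum borel_measurable_times borel_measurable_const local_thr_measurable)
    simp_all

lemma agg_thr_mem_interval:
  assumes "\<And>k. k < M \<Longrightarrow> local_thr V \<alpha> (n k) (\<lambda>i. d (k, i)) \<in> {a..b}" and "0 < total_size M n"
  shows "agg_thr V \<alpha> M n d \<in> {a..b}"
proof -
  have "(\<Sum>k<M. real (n k) / real (total_size M n)) = (\<Sum>k<M. real (n k)) / real (total_size M n)"
    by (rule sum_divide_distrib[symmetric])
  also have "(\<Sum>k<M. real (n k)) = real (total_size M n)"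
    by (simp add: total_size_def)
  also have "\<dots> / real (total_size M n) = 1"
    using assms(2) by simp
  finally have "(\<Sum>k<M. (real (n k) / real (total_size M n)) *\<^sub>R local_thr V \<alpha> (n k) (\<lambda>i. d (k, i)))
      \<in> {a..b}"
    by (intro convex_sum assms(1)) auto
  then show ?thesis
    by (simp add: agg_thr_def)
qed

lemma local_thr_outside_prob:
  fixes V :: "'z \<Rightarrow> real"
  assumes Pc: "\<And>k. k < M \<Longrightarrow> prob_space (Pc k)" and k: "k < M"
    and V: "V \<in> borel_measurable (Pc k)" and \<alpha>: "0 < \<alpha>" "\<alpha> < 1" and \<delta>: "0 < \<delta>"
    and n: "8 \<le> real (n k) * \<delta>" "1 \<le> real (n k) * \<alpha>"
    and below: "measure (Pc k) {z \<in> space (Pc k). V z \<le> v1} \<le> 1 - \<alpha> - \<delta> / 2"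
    and above: "1 - \<alpha> + \<delta> / 2 \<le> measure (Pc k) {z \<in> space (Pc k). V z \<le> v2}"
  shows "measure (cal_measure M n Pc)
      {d \<in> space (cal_measure M n Pc). local_thr V \<alpha> (n k) (\<lambda>i. d (k, i)) \<notin> {v1..v2}}
    \<le> 2 * exp (- (\<delta>\<^sup>2 / 8) * real (n k))"
proof -
  define Cal where "Cal = cal_measure M n Pc"
  interpret prob_space Cal
    unfolding Cal_def using Pc by (rule prob_space_cal_measure)
  define count where "count v d = real (card {i. i < n k \<and> V (d (k, i)) \<le> v})" for v d
  define p where "p v = measure (Pc k) {z \<in> space (Pc k). V z \<le> v}" for v
  (* Of the margin n delta / 2 left by the agent's CDF, rounding the rank costs n delta / 4
     (conformal_rank_margin) and the rest is the Hoeffding deviation. *)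
  define \<epsilon> where "\<epsilon> = real (n k) * \<delta> / 4"
  have n_pos: "0 < n k"
    using n(1) \<delta> by (cases "n k") auto
  have pred: "Measurable.pred (Pc k) (\<lambda>z. V z \<le> v)" for v
    using V by (rule pred_le_const) simp
  have "count v \<in> borel_measurable Cal" for v
    unfolding count_def Cal_def
    by (rule cal_measure_count_measurable[where Pc = Pc and n = n, OF k pred])
  then have events: "{d \<in> space Cal. c \<le> count v d} \<in> sets Cal"
    "{d \<in> space Cal. count v d \<le> c} \<in> sets Cal" for c v
    by (simp_all add: borel_measurable_le)
  have "real (n k) * p v1 \<le> real (n k) * (1 - \<alpha> - \<delta> / 2)"
    and "real (n k) * (1 - \<alpha> + \<delta> / 2) \<le> real (n k) * p v2"
    using below above by (auto simp: p_def intro!: mult_left_mono)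
  with conformal_rank_margin[OF \<alpha> \<delta> n(1)]
  have "real (n k) * p v1 + \<epsilon> \<le> conformal_rank \<alpha> (n k)"
    and "conformal_rank \<alpha> (n k) \<le> real (n k) * p v2 - \<epsilon>"
    by (simp_all add: \<epsilon>_def algebra_simps)
  with local_thr_notin_interval[OF conformal_rank_bounds[OF \<alpha> n(2)]]
  have "{d \<in> space Cal. local_thr V \<alpha> (n k) (\<lambda>i. d (k, i)) \<notin> {v1..v2}}
      \<subseteq> {d \<in> space Cal. real (n k) * p v1 + \<epsilon> \<le> count v1 d}
        \<union> {d \<in> space Cal. count v2 d \<le> real (n k) * p v2 - \<epsilon>}"
    unfolding count_def by fastforce
  then have "measure Cal {d \<in> space Cal. local_thr V \<alpha> (n k) (\<lambda>i. d (k, i)) \<notin> {v1..v2}}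
      \<le> measure Cal {d \<in> space Cal. real (n k) * p v1 + \<epsilon> \<le> count v1 d}
        + measure Cal {d \<in> space Cal. count v2 d \<le> real (n k) * p v2 - \<epsilon>}"
    by (intro order_trans[OF finite_measure_mono measure_Un_le] sets.Un events)
  also have "\<dots> \<le> exp (-2 * \<epsilon>\<^sup>2 / real (n k)) + exp (-2 * \<epsilon>\<^sup>2 / real (n k))"
    using cal_measure_count_hoeffding[where Pc = Pc and n = n, OF Pc k n_pos pred, of \<epsilon>] \<delta>
    by (intro add_mono) (simp_all add: Cal_def count_def p_def \<epsilon>_def)
  also have "-2 * \<epsilon>\<^sup>2 / real (n k) = - (\<delta>\<^sup>2 / 8) * real (n k)"
    using n_pos by (simp add: \<epsilon>_def power2_eq_square field_simps)
  finally show ?thesis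
    by (simp add: Cal_def)
qed

lemma local_thrs_outside_prob:
  fixes V :: "'z \<Rightarrow> real"
  assumes Pc: "\<And>k. k < M \<Longrightarrow> prob_space (Pc k)" and V: "\<And>k. k < M \<Longrightarrow> V \<in> borel_measurable (Pc k)"
    and \<alpha>: "0 < \<alpha>" "\<alpha> < 1" and \<delta>: "0 < \<delta>"
    and n: "\<And>k. k < M \<Longrightarrow> 8 \<le> real (n k) * \<delta> \<and> 1 \<le> real (n k) * \<alpha>"
    and below: "\<And>k. k < M \<Longrightarrow> measure (Pc k) {z \<in> space (Pc k). V z \<le> v1} \<le> 1 - \<alpha> - \<delta> / 2"
    and above: "\<And>k. k < M \<Longrightarrow> 1 - \<alpha> + \<delta> / 2 \<le> measure (Pc k) {z \<in> space (Pc k). V z \<le> v2}"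
  defines "B \<equiv> {d \<in> space (cal_measure M n Pc). \<exists>k<M. local_thr V \<alpha> (n k) (\<lambda>i. d (k, i)) \<notin> {v1..v2}}"
  shows "B \<in> sets (cal_measure M n Pc)"
    and "measure (cal_measure M n Pc) B \<le> (\<Sum>k<M. 2 * exp (- (\<delta>\<^sup>2 / 8) * real (n k)))"
proof -
  define Bad where
    "Bad k = {d \<in> space (cal_measure M n Pc). local_thr V \<alpha> (n k) (\<lambda>i. d (k, i)) \<notin> {v1..v2}}" for k
  have B_eq: "B = (\<Union>k<M. Bad k)"
    by (auto simp: B_def Bad_def)
  have Bad: "Bad k \<in> sets (cal_measure M n Pc)" if k: "k < M" for k
  proof -
    have [measurable]: "(\<lambda>d. local_thr V \<alpha> (n k) (\<lambda>i. d (k, i))) \<in> borel_measurable (cal_measure M n Pc)"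
      using k V[OF k] conformal_rank_bounds[OF \<alpha>] n[OF k] by (intro local_thr_measurable) auto
    show ?thesis
      unfolding Bad_def by measurable
  qed
  then show "B \<in> sets (cal_measure M n Pc)"
    unfolding B_eq by auto
  have "measure (cal_measure M n Pc) (Bad k) \<le> 2 * exp (- (\<delta>\<^sup>2 / 8) * real (n k))" if k: "k < M" for k
    unfolding Bad_def using n[OF k] below[OF k] above[OF k]
    by (intro local_thr_outside_prob[where Pc = Pc and n = n, OF Pc k V[OF k] \<alpha> \<delta>]) auto
  then show "measure (cal_measure M n Pc) B \<le> (\<Sum>k<M. 2 * exp (- (\<delta>\<^sup>2 / 8) * real (n k)))"
    unfolding B_eq using Bad by (intro measure_UNION_le[THEN order_trans] sum_mono) auto
qed

lemma measure_pair_measure_Times: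
  assumes "prob_space N" "prob_space P" "A \<in> sets N" "B \<in> sets P"
  shows "measure (N \<Otimes>\<^sub>M P) (A \<times> B) = measure N A * measure P B"
proof -
  interpret P: prob_space P by fact
  have "emeasure (N \<Otimes>\<^sub>M P) (A \<times> B) = emeasure N A * emeasure P B"
    using assms(3,4) by (rule P.emeasure_pair_measure_Times)
  then show ?thesis
    by (simp add: measure_def enn2real_mult)
qed

lemma pair_measure_threshold_bounds:
  fixes q :: "'a \<Rightarrow> real" and V :: "'b \<Rightarrow> real"
  assumes C: "prob_space C" and P: "prob_space P"
    and q: "q \<in> borel_measurable C" and V: "V \<in> borel_measurable P"
    and B: "B \<in> sets C" and good: "\<And>d. d \<in> space C - B \<Longrightarrow> q d \<in> {v1..v2}"
  defines "A \<equiv> {x \<in> space (C \<Otimes>\<^sub>M P). V (snd x) \<le> q (fst x)}"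
  shows "measure P {z \<in> space P. V z \<le> v1} - measure C B \<le> measure (C \<Otimes>\<^sub>M P) A"
    and "measure (C \<Otimes>\<^sub>M P) A \<le> measure P {z \<in> space P. V z \<le> v2} + measure C B"
proof -
  interpret C: prob_space C by fact
  interpret T: prob_space P by fact
  interpret pair_prob_space C P ..
  define L where "L v = {z \<in> space P. V z \<le> v}" for v
  have L: "L v \<in> sets P" for v
    unfolding L_def using V by (rule borel_measurable_le[OF _ borel_measurable_const])
  have "(\<lambda>x. V (snd x)) \<in> borel_measurable (C \<Otimes>\<^sub>M P)" "(\<lambda>x. q (fst x)) \<in> borel_measurable (C \<Otimes>\<^sub>M P)"
    using V q
    by (auto intro: measurable_compose[OF measurable_snd] measurable_compose[OF measurable_fst])
  then have A: "A \<in> sets (C \<Otimes>\<^sub>M P)"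
    unfolding A_def by (rule borel_measurable_le)
  have "(space C - B) \<times> L v1 \<subseteq> A"
    using good by (force simp: A_def L_def space_pair_measure)
  then have "measure (C \<Otimes>\<^sub>M P) ((space C - B) \<times> L v1) \<le> measure (C \<Otimes>\<^sub>M P) A"
    using A by (rule finite_measure_mono)
  moreover have "measure (C \<Otimes>\<^sub>M P) ((space C - B) \<times> L v1) = (1 - measure C B) * measure P (L v1)"
    using B L by (simp add: measure_pair_measure_Times C P C.prob_compl)
  moreover have "measure C B * measure P (L v1) \<le> measure C B"
    using T.prob_le_1 by (simp add: mult_left_le)
  ultimately show "measure P {z \<in> space P. V z \<le> v1} - measure C B \<le> measure (C \<Otimes>\<^sub>M P) A"
    by (simp add: L_def algebra_simps)
  have "A \<subseteq> B \<times> space P \<union> space C \<times> L v2"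
    using good by (force simp: A_def L_def space_pair_measure)
  then have "measure (C \<Otimes>\<^sub>M P) A \<le> measure (C \<Otimes>\<^sub>M P) (B \<times> space P \<union> space C \<times> L v2)"
    using B L by (intro finite_measure_mono) auto
  also have "\<dots> \<le> measure (C \<Otimes>\<^sub>M P) (B \<times> space P) + measure (C \<Otimes>\<^sub>M P) (space C \<times> L v2)"
    using B L by (intro measure_Un_le) auto
  also have "\<dots> = measure C B + measure P (L v2)"
    using B L by (simp add: measure_pair_measure_Times C P C.prob_space T.prob_space)
  finally show "measure (C \<Otimes>\<^sub>M P) A \<le> measure P {z \<in> space P. V z \<le> v2} + measure C B"
    by (simp add: L_def algebra_simps)
qed

lemma measure_diff_le_tv_dist:
  assumes "prob_space P" "prob_space Q" "A \<in> sets P"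
  shows "\<bar>measure P A - measure Q A\<bar> \<le> tv_dist P Q"
  unfolding tv_dist_def
proof (rule cSUP_upper[OF assms(3)])
  interpret P: prob_space P by fact
  interpret Q: prob_space Q by fact
  have "\<bar>measure P X - measure Q X\<bar> \<le> 1" for X
    using P.prob_le_1[of X] Q.prob_le_1[of X] measure_nonneg[of P X] measure_nonneg[of Q X]
    unfolding abs_le_iff by linarith
  then show "bdd_above ((\<lambda>A. \<bar>measure P A - measure Q A\<bar>) ` sets P)"
    by (intro bdd_aboveI2)
qed

lemma cdf_diff_le_tv_dist:
  fixes V :: "'a \<Rightarrow> real"
  assumes "prob_space P" "prob_space Q" "sets P = sets Q" "V \<in> borel_measurable P"
  shows "\<bar>measure P {z \<in> space P. V z \<le> v} - measure Q {z \<in> space Q. V z \<le> v}\<bar> \<le> tv_dist P Q"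
proof -
  have "space P = space Q"
    using assms(3) by (rule sets_eq_imp_space_eq)
  moreover have "{z \<in> space P. V z \<le> v} \<in> sets P"
    using assms(4) by (rule borel_measurable_le[OF _ borel_measurable_const])
  ultimately show ?thesis
    using measure_diff_le_tv_dist[OF assms(1,2)] by simp
qed

definition coverage ::
    "('z \<Rightarrow> real) \<Rightarrow> real \<Rightarrow> nat \<Rightarrow> (nat \<Rightarrow> nat) \<Rightarrow> (nat \<Rightarrow> 'z measure) \<Rightarrow> 'z measure \<Rightarrow> real"
  where "coverage V \<alpha> M n Pc Ptest =
    measure (cal_measure M n Pc \<Otimes>\<^sub>M Ptest)
      {x \<in> space (cal_measure M n Pc \<Otimes>\<^sub>M Ptest). V (snd x) \<le> agg_thr V \<alpha> M n (fst x)}"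

lemma coverage_deviation_bound:
  fixes V :: "'z \<Rightarrow> real" and Pc :: "nat \<Rightarrow> 'z measure"
  assumes \<alpha>: "0 < \<alpha>" "\<alpha> < 1" and M: "0 < M"
    and Ptest: "prob_space Ptest" and V: "V \<in> borel_measurable Ptest"
    and Pc: "\<And>k. k < M \<Longrightarrow> prob_space (Pc k) \<and> sets (Pc k) = sets Ptest"
    and \<delta>: "0 < \<delta>"
    and G1: "measure Ptest {z \<in> space Ptest. V z \<le> v1} = 1 - \<alpha> - \<delta>"
    and G2: "measure Ptest {z \<in> space Ptest. V z \<le> v2} = 1 - \<alpha> + \<delta>"
    and tv: "\<And>k. k < M \<Longrightarrow> tv_dist (Pc k) Ptest \<le> \<delta> / 2"
    and n: "\<And>k. k < M \<Longrightarrow> 8 \<le> real (n k) * \<delta> \<and> 1 \<le> real (n k) * \<alpha>"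
  shows "\<bar>coverage V \<alpha> M n Pc Ptest - (1 - \<alpha>)\<bar> \<le> \<delta> + (\<Sum>k<M. 2 * exp (- (\<delta>\<^sup>2 / 8) * real (n k)))"
proof -
  define Cal where "Cal = cal_measure M n Pc"
  define B where "B = {d \<in> space Cal. \<exists>k<M. local_thr V \<alpha> (n k) (\<lambda>i. d (k, i)) \<notin> {v1..v2}}"
  have prob_Pc: "\<And>k. k < M \<Longrightarrow> prob_space (Pc k)"
    using Pc by blast
  interpret Cal: prob_space Cal
    unfolding Cal_def using prob_Pc by (rule prob_space_cal_measure)
  have V_Pc: "V \<in> borel_measurable (Pc k)" if "k < M" for k
    using V Pc[OF that] by (simp cong: measurable_cong_sets)
  have cdf_close: "\<bar>measure (Pc k) {z \<in> space (Pc k). V z \<le> v}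
      - measure Ptest {z \<in> space Ptest. V z \<le> v}\<bar> \<le> \<delta> / 2" if k: "k < M" for k v
    using cdf_diff_le_tv_dist[OF prob_Pc[OF k] Ptest conjunct2[OF Pc[OF k]] V_Pc[OF k], of v] tv[OF k]
    by linarith
  have below: "measure (Pc k) {z \<in> space (Pc k). V z \<le> v1} \<le> 1 - \<alpha> - \<delta> / 2"
    and above: "1 - \<alpha> + \<delta> / 2 \<le> measure (Pc k) {z \<in> space (Pc k). V z \<le> v2}" if k: "k < M" for k
    using abs_le_D1[OF cdf_close[OF k, of v1]] abs_le_D2[OF cdf_close[OF k, of v2]] G1 G2 by linarith+
  have B: "B \<in> sets Cal"
    unfolding Cal_def B_def
    by (rule local_thrs_outside_prob(1)[where \<delta> = \<delta>]) (use prob_Pc V_Pc \<alpha> \<delta> n below above in simp_all)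
  have PB: "measure Cal B \<le> (\<Sum>k<M. 2 * exp (- (\<delta>\<^sup>2 / 8) * real (n k)))"
    unfolding Cal_def B_def
    by (rule local_thrs_outside_prob(2)) (use prob_Pc V_Pc \<alpha> \<delta> n below above in simp_all)
  have "0 < n 0"
    using n[OF M] \<delta> by (cases "n 0") auto
  moreover have "n 0 \<le> total_size M n"
    unfolding total_size_def using M by (intro member_le_sum) auto
  ultimately have good: "agg_thr V \<alpha> M n d \<in> {v1..v2}" if "d \<in> space Cal - B" for d
    using that by (intro agg_thr_mem_interval) (auto simp: B_def)
  have "agg_thr V \<alpha> M n \<in> borel_measurable Cal"
    unfolding Cal_def using V_Pc conformal_rank_bounds[OF \<alpha>] n by (intro agg_thr_measurable) auto
  from pair_measure_threshold_bounds[where q = "agg_thr V \<alpha> M n",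
      OF Cal.prob_space_axioms Ptest this V B good]
  show ?thesis
    unfolding coverage_def Cal_def[symmetric] abs_le_iff using PB G1 G2 by linarith
qed

lemma continuous_cdf_attains:
  fixes V :: "'z \<Rightarrow> real"
  assumes P: "prob_space P" and V: "V \<in> borel_measurable P"
    and cont: "continuous_on UNIV (\<lambda>v. measure P {z \<in> space P. V z \<le> v})"
    and y: "0 < y" "y < 1"
  obtains v where "measure P {z \<in> space P. V z \<le> v} = y"
proof -
  interpret P: prob_space P by fact
  interpret D: real_distribution "distr P borel V"
    using P.prob_space_distr[OF V] by (simp add: real_distribution_def real_distribution_axioms_def)
  define G where "G v = measure P {z \<in> space P. V z \<le> v}" for v
  have cdf: "cdf (distr P borel V) = G"
    using V by (auto simp: fun_eq_iff cdf_def measure_distr G_def vimage_def Int_def conj_commute)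
  obtain a where a: "G a < y"
    using eventually_happens'[OF _ order_tendstoD(2)[OF D.cdf_lim_at_bot y(1)]] by (auto simp: cdf)
  obtain b where b: "y < G b"
    using eventually_happens'[OF _ order_tendstoD(1)[OF D.cdf_lim_at_top_prob y(2)]] by (auto simp: cdf)
  have "a \<le> b"
    using D.cdf_nondecreasing[of b a] a b by (force simp: cdf)
  then obtain v where "G v = y"
    using IVT'[of G a y b] a b continuous_on_subset[OF cont] by (force simp: G_def)
  then show thesis
    by (intro that) (simp add: G_def)
qed

lemma tendsto_exp_neg_mult_at_top:
  fixes g :: "'a \<Rightarrow> real"
  assumes "0 < c" and "filterlim g at_top F"
  shows "((\<lambda>x. exp (- c * g x)) \<longlongrightarrow> 0) F"
proof -
  have "filterlim (\<lambda>x. - c * g x) at_bot F"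
    using assms by (intro filterlim_tendsto_neg_mult_at_bot[OF tendsto_const]) simp_all
  then show ?thesis
    by (rule filterlim_compose[OF exp_at_bot])
qed

lemma coverage_tendsto:
  fixes V :: "'z \<Rightarrow> real" and Pc :: "nat \<Rightarrow> nat \<Rightarrow> 'z measure" and n :: "nat \<Rightarrow> nat \<Rightarrow> nat"
  assumes \<alpha>: "0 < \<alpha>" "\<alpha> < 1" and M: "0 < M"
    and Ptest: "prob_space Ptest" and V: "V \<in> borel_measurable Ptest"
    and Pc: "\<And>t k. k < M \<Longrightarrow> prob_space (Pc t k) \<and> sets (Pc t k) = sets Ptest"
    and G_cont: "continuous_on UNIV (\<lambda>v. measure Ptest {z \<in> space Ptest. V z \<le> v})"
    and n_inf: "\<And>k. k < M \<Longrightarrow> filterlim (\<lambda>t. n t k) at_top sequentially"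
    and tv_lim: "(\<lambda>t. SUP k \<in> {..<M}. tv_dist (Pc t k) Ptest) \<longlonglongrightarrow> 0"
  shows "(\<lambda>t. coverage V \<alpha> M (n t) (Pc t) Ptest) \<longlonglongrightarrow> 1 - \<alpha>"
proof (rule tendstoI)
  fix e :: real assume "0 < e"
  define \<delta> where "\<delta> = min (e / 2) (min (\<alpha> / 2) ((1 - \<alpha>) / 2))"
  have \<delta>: "0 < \<delta>" "\<delta> \<le> e / 2" "\<delta> < \<alpha>" "\<delta> < 1 - \<alpha>"
    using \<open>0 < e\<close> \<alpha> unfolding \<delta>_def by (simp_all add: min_le_iff_disj min_less_iff_disj)
  obtain v1 where G1: "measure Ptest {z \<in> space Ptest. V z \<le> v1} = 1 - \<alpha> - \<delta>"
    using continuous_cdf_attains[OF Ptest V G_cont, of "1 - \<alpha> - \<delta>"] \<delta> by auto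
  obtain v2 where G2: "measure Ptest {z \<in> space Ptest. V z \<le> v2} = 1 - \<alpha> + \<delta>"
    using continuous_cdf_attains[OF Ptest V G_cont, of "1 - \<alpha> + \<delta>"] \<delta> by auto
  have le_SUP: "tv_dist (Pc t k) Ptest \<le> (SUP k \<in> {..<M}. tv_dist (Pc t k) Ptest)" if "k < M" for t k
    using that by (intro cSUP_upper) auto
  have "\<forall>\<^sub>F t in sequentially. (SUP k \<in> {..<M}. tv_dist (Pc t k) Ptest) < \<delta> / 2"
    using tv_lim \<delta> by (intro order_tendstoD(2)) auto
  then have tv: "\<forall>\<^sub>F t in sequentially. \<forall>k<M. tv_dist (Pc t k) Ptest \<le> \<delta> / 2"
    by (rule eventually_mono) (use le_SUP in \<open>smt (verit)\<close>)
  have "\<forall>\<^sub>F t in sequentially. \<forall>k\<in>{..<M}. max (8 / \<delta>) (1 / \<alpha>) \<le> real (n t k)"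
    using filterlim_compose[OF filterlim_real_sequentially n_inf]
    by (intro eventually_ball_finite) (auto simp: filterlim_at_top simp del: max.bounded_iff)
  then have large: "\<forall>\<^sub>F t in sequentially. \<forall>k\<in>{..<M}. 8 \<le> real (n t k) * \<delta> \<and> 1 \<le> real (n t k) * \<alpha>"
    by eventually_elim (simp add: pos_divide_le_eq \<delta>(1) \<alpha>(1))
  have "((\<lambda>t. 2 * exp (- (\<delta>\<^sup>2 / 8) * real (n t k))) \<longlongrightarrow> 0) sequentially" if "k \<in> {..<M}" for k
    using \<delta>(1) filterlim_compose[OF filterlim_real_sequentially n_inf] that
    by (intro tendsto_mult_right_zero tendsto_exp_neg_mult_at_top) simp_all
  then have "((\<lambda>t. \<Sum>k<M. 2 * exp (- (\<delta>\<^sup>2 / 8) * real (n t k))) \<longlongrightarrow> 0) sequentially"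
    by (rule tendsto_null_sum)
  then have small: "\<forall>\<^sub>F t in sequentially. (\<Sum>k<M. 2 * exp (- (\<delta>\<^sup>2 / 8) * real (n t k))) < e / 2"
    using \<open>0 < e\<close> by (intro order_tendstoD(2)) auto
  from tv large small show "\<forall>\<^sub>F t in sequentially. dist (coverage V \<alpha> M (n t) (Pc t) Ptest) (1 - \<alpha>) < e"
  proof eventually_elim
    case (elim t)
    then have "\<bar>coverage V \<alpha> M (n t) (Pc t) Ptest - (1 - \<alpha>)\<bar>
        \<le> \<delta> + (\<Sum>k<M. 2 * exp (- (\<delta>\<^sup>2 / 8) * real (n t k)))"
      by (intro coverage_deviation_bound[OF \<alpha> M Ptest V Pc \<delta>(1) G1 G2]) auto
    then show ?case
      using elim \<delta>(2) by (simp add: dist_real_def)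
  qed
qed

theorem theorem2:
  fixes \<alpha> :: real and M :: nat
    and S :: "('x \<times> 'y) measure"
    and V :: "'x \<times> 'y \<Rightarrow> real"
    and Ptest :: "('x \<times> 'y) measure"
    and Pc :: "nat \<Rightarrow> nat \<Rightarrow> ('x \<times> 'y) measure"
    and n :: "nat \<Rightarrow> nat \<Rightarrow> nat"
  assumes alpha: "0 < \<alpha>" "\<alpha> < 1"
    and M_pos: "0 < M"
    and V_meas: "V \<in> borel_measurable S"
    and P_test: "prob_space Ptest" "sets Ptest = sets S"
    and P_cal: "\<And>t k. k < M \<Longrightarrow> prob_space (Pc t k) \<and> sets (Pc t k) = sets S"
    and G_cont: "continuous_on UNIV (\<lambda>v. measure Ptest {z \<in> space Ptest. V z \<le> v})"
    and n_inf: "\<And>k. k < M \<Longrightarrow> filterlim (\<lambda>t. n t k) at_top sequentially"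
    and tv_lim: "(\<lambda>t. SUP k \<in> {..<M}. tv_dist (Pc t k) Ptest) \<longlonglongrightarrow> 0"
    and q_close: "\<And>\<epsilon>. \<epsilon> > 0 \<Longrightarrow>
       (\<lambda>t. measure (cal_measure M (n t) (Pc t))
          {d \<in> space (cal_measure M (n t) (Pc t)).
             \<bar>agg_thr V \<alpha> M (n t) d - mix_thr V \<alpha> M (n t) d\<bar> > \<epsilon>}) \<longlonglongrightarrow> 0"
  shows "(\<lambda>t. \<bar>measure (cal_measure M (n t) (Pc t) \<Otimes>\<^sub>M Ptest)
            {p \<in> space (cal_measure M (n t) (Pc t) \<Otimes>\<^sub>M Ptest).
               snd (snd p) \<in> C_set V (agg_thr V \<alpha> M (n t) (fst p)) (fst (snd p))}
          - (1 - \<alpha>)\<bar>) \<longlonglongrightarrow> 0"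
proof -
  have V: "V \<in> borel_measurable Ptest"
    using V_meas P_test(2) by (simp cong: measurable_cong_sets)
  have Pc: "\<And>t k. k < M \<Longrightarrow> prob_space (Pc t k) \<and> sets (Pc t k) = sets Ptest"
    using P_cal P_test(2) by simp
  have coverage_eq: "measure (cal_measure M (n t) (Pc t) \<Otimes>\<^sub>M Ptest)
      {p \<in> space (cal_measure M (n t) (Pc t) \<Otimes>\<^sub>M Ptest).
        snd (snd p) \<in> C_set V (agg_thr V \<alpha> M (n t) (fst p)) (fst (snd p))}
    = coverage V \<alpha> M (n t) (Pc t) Ptest" for t
    by (simp add: coverage_def C_set_def)
  show ?thesis
    unfolding coverage_eq
    using coverage_tendsto[OF alpha M_pos P_test(1) V Pc G_cont n_inf tv_lim]
    by (intro tendsto_rabs_zero LIM_zero)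
qed

end
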